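(* Let $\mathscr{H}$ be a finite-dimensional complex Hilbert space and, for $i=1,\dots,n$, let $A_i=\{a^{(i)}_k\}_{k=1}^{m_i}$ be a tight frame of $\mathscr{H}$ with frame bound $\alpha_i>0$. Then $A_1,\dots,A_n$ are $s$-order incompatible if and only if $\sum_{i=1}^{n}n_{A_i}(|\varphi\rangle)\ge s$ for every nonzero $|\varphi\rangle\in\mathscr{H}$ with equality attained for some nonzero $|\varphi\rangle$, i.e. $\min_{|\varphi\rangle\neq0}\sum_{i=1}^{n}n_{A_i}(|\varphi\rangle)=s$.
   Context: A finite family $\{a_k\}_{k=1}^{m}\subset\mathscr{H}$ is a tight frame with frame bound $\alpha>0$ if $\sum_{k=1}^{m}|\langle x,a_k\rangle|^2=\alpha\|x\|^2$ for all $x\in\mathscr{H}$. Write $I_i=\{1,\dots,m_i\}$. The tight frames $A_1,\dots,A_n$ are called $s$-order incompatible, for an integer $s$, if: (1) for all nonempty $S_i\subseteq I_i$ ($i=1,\dots,n$) with $\sum_i|S_i|<s$ and every nonzero $x\in\mathscr{H}$, the equalities $\sum_{k\in S_i}|\langle x,a^{(i)}_k\rangle|^2=\alpha_i\|x\|^2$ do not hold simultaneously for all $i=1,\dots,n$; and (2) there exist nonempty $S_i\subseteq I_i$ with $\sum_i|S_i|=s$ and a nonzero $x\in\mathscr{H}$ such that these equalities hold for all $i$. For a vector $|\varphi\rangle$, $n_{A_i}(|\varphi\rangle)$ is the number of indices $k$ with $\langle a^{(i)}_k,\varphi\rangle\neq0$. *)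

theory Defs
  imports "HOL-Analysis.Analysis"
begin

text \<open>The finite-dimensional complex Hilbert space is modelled as complex ^ 'd
  (any finite index type 'd), with the standard inner product, linear in the
  first argument and conjugate-linear in the second; the norm on complex ^ 'd
  is the induced Euclidean norm.\<close>

definition cinner :: "complex ^ 'd \<Rightarrow> complex ^ 'd \<Rightarrow> complex" where
  "cinner x y = (\<Sum>j\<in>UNIV. x $ j * cnj (y $ j))"

definition tight_frame :: "(nat \<Rightarrow> complex ^ 'd) \<Rightarrow> nat \<Rightarrow> real \<Rightarrow> bool" where
  "tight_frame a m \<alpha> \<longleftrightarrow> \<alpha> > 0 \<and>
     (\<forall>x. (\<Sum>k\<in>{1..m}. (cmod (cinner x (a k)))\<^sup>2) = \<alpha> * (norm x)\<^sup>2)"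

definition frame_eqs ::
  "(nat \<Rightarrow> nat \<Rightarrow> complex ^ 'd) \<Rightarrow> (nat \<Rightarrow> real) \<Rightarrow> nat \<Rightarrow> (nat \<Rightarrow> nat set) \<Rightarrow> complex ^ 'd \<Rightarrow> bool" where
  "frame_eqs A \<alpha> n S x \<longleftrightarrow>
     (\<forall>i\<in>{1..n}. (\<Sum>k\<in>S i. (cmod (cinner x (A i k)))\<^sup>2) = \<alpha> i * (norm x)\<^sup>2)"

definition admissible_sets :: "(nat \<Rightarrow> nat) \<Rightarrow> nat \<Rightarrow> (nat \<Rightarrow> nat set) \<Rightarrow> bool" where
  "admissible_sets m n S \<longleftrightarrow> (\<forall>i\<in>{1..n}. S i \<noteq> {} \<and> S i \<subseteq> {1..m i})"

definition s_order_incompatible ::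
  "(nat \<Rightarrow> nat \<Rightarrow> complex ^ 'd) \<Rightarrow> (nat \<Rightarrow> nat) \<Rightarrow> (nat \<Rightarrow> real) \<Rightarrow> nat \<Rightarrow> int \<Rightarrow> bool" where
  "s_order_incompatible A m \<alpha> n s \<longleftrightarrow>
     (\<forall>S. admissible_sets m n S \<and> int (\<Sum>i\<in>{1..n}. card (S i)) < s \<longrightarrow>
        (\<forall>x. x \<noteq> 0 \<longrightarrow> \<not> frame_eqs A \<alpha> n S x)) \<and>
     (\<exists>S x. admissible_sets m n S \<and> int (\<Sum>i\<in>{1..n}. card (S i)) = s \<and>
        x \<noteq> 0 \<and> frame_eqs A \<alpha> n S x)"

definition n_count :: "(nat \<Rightarrow> complex ^ 'd) \<Rightarrow> nat \<Rightarrow> complex ^ 'd \<Rightarrow> nat" where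
  "n_count a m \<phi> = card {k\<in>{1..m}. cinner (a k) \<phi> \<noteq> 0}"

end

theory Submission
  imports Defs
begin

text \<open>For a tight frame the partial frame sum over S equals the full sum alpha * norm x ^ 2
  exactly when the omitted terms vanish, i.e. when S contains the support of x in the frame.
  Hence the equalities for (S 1, ..., S n) and x hold iff every S i contains the support of x
  in A i; the smallest admissible total size for a given x is therefore the sum of the
  support sizes, which is the sum of the n_A i(x), and it is attained by the supports
  themselves (nonempty since x is nonzero and the frame bounds are positive).\<close>

definition frame_support :: "(nat \<Rightarrow> complex ^ 'd) \<Rightarrow> nat \<Rightarrow> complex ^ 'd \<Rightarrow> nat set" where
  "frame_support a m x = {k\<in>{1..m}. cinner (a k) x \<noteq> 0}"

lemma n_count_eq_card_frame_support: "n_count a m x = card (frame_support a m x)"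
  by (simp add: n_count_def frame_support_def)

lemma frame_support_subset: "frame_support a m x \<subseteq> {1..m}"
  by (auto simp: frame_support_def)

lemma cmod_cinner_commute: "cmod (cinner x y) = cmod (cinner y x)"
proof -
  have "cinner y x = cnj (cinner x y)"
    unfolding cinner_def by (simp add: mult.commute)
  then show ?thesis by simp
qed

lemma tight_frame_partial_sum_eq_iff:
  assumes "tight_frame a m \<alpha>" and "S \<subseteq> {1..m}"
  shows "(\<Sum>k\<in>S. (cmod (cinner x (a k)))\<^sup>2) = \<alpha> * (norm x)\<^sup>2 \<longleftrightarrow> frame_support a m x \<subseteq> S"
proof -
  let ?f = "\<lambda>k. (cmod (cinner x (a k)))\<^sup>2"
  have "(\<Sum>k\<in>S. ?f k) + (\<Sum>k\<in>{1..m} - S. ?f k) = \<alpha> * (norm x)\<^sup>2"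
    using assms sum.subset_diff[OF assms(2) finite_atLeastAtMost, of ?f]
    unfolding tight_frame_def by simp
  then have "(\<Sum>k\<in>S. ?f k) = \<alpha> * (norm x)\<^sup>2 \<longleftrightarrow> (\<Sum>k\<in>{1..m} - S. ?f k) = 0"
    by linarith
  also have "\<dots> \<longleftrightarrow> (\<forall>k\<in>{1..m} - S. ?f k = 0)"
    by (rule sum_nonneg_eq_0_iff) auto
  also have "\<dots> \<longleftrightarrow> frame_support a m x \<subseteq> S"
    by (auto simp: frame_support_def cmod_cinner_commute[of x])
  finally show ?thesis .
qed

lemma tight_frame_support_nonempty:
  assumes "tight_frame a m \<alpha>" and "x \<noteq> 0"
  shows "frame_support a m x \<noteq> {}"
proof
  assume "frame_support a m x = {}"
  then have "(\<Sum>k\<in>{1..m}. (cmod (cinner x (a k)))\<^sup>2) = 0"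
    by (intro sum.neutral) (auto simp: frame_support_def cmod_cinner_commute[of x])
  with assms show False
    unfolding tight_frame_def by simp
qed

lemma frame_eqs_iff_frame_support_subset:
  assumes "\<forall>i\<in>{1..n}. tight_frame (A i) (m i) (\<alpha> i)"
    and "\<forall>i\<in>{1..n}. S i \<subseteq> {1..m i}"
  shows "frame_eqs A \<alpha> n S x \<longleftrightarrow> (\<forall>i\<in>{1..n}. frame_support (A i) (m i) x \<subseteq> S i)"
  unfolding frame_eqs_def using assms by (intro ball_cong tight_frame_partial_sum_eq_iff) auto

lemma frame_eqs_frame_support:
  assumes "\<forall>i\<in>{1..n}. tight_frame (A i) (m i) (\<alpha> i)"
  shows "frame_eqs A \<alpha> n (\<lambda>i. frame_support (A i) (m i) x) x"
  by (intro frame_eqs_iff_frame_support_subset[OF assms, THEN iffD2] ballI frame_support_subset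
      subset_refl)

lemma admissible_frame_support:
  assumes "\<forall>i\<in>{1..n}. tight_frame (A i) (m i) (\<alpha> i)" and "x \<noteq> 0"
  shows "admissible_sets m n (\<lambda>i. frame_support (A i) (m i) x)"
  unfolding admissible_sets_def
  using assms tight_frame_support_nonempty frame_support_subset by metis

lemma sum_n_count_le_sum_card:
  assumes "\<forall>i\<in>{1..n}. tight_frame (A i) (m i) (\<alpha> i)"
    and "admissible_sets m n S" and "frame_eqs A \<alpha> n S x"
  shows "(\<Sum>i\<in>{1..n}. n_count (A i) (m i) x) \<le> (\<Sum>i\<in>{1..n}. card (S i))"
proof (rule sum_mono)
  fix i assume i: "i \<in> {1..n}"
  have "S i \<subseteq> {1..m i}"
    using assms(2) i unfolding admissible_sets_def by blast
  moreover from this have "frame_support (A i) (m i) x \<subseteq> S i"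
    using assms i frame_eqs_iff_frame_support_subset[OF assms(1), of S]
    unfolding admissible_sets_def by metis
  ultimately show "n_count (A i) (m i) x \<le> card (S i)"
    unfolding n_count_eq_card_frame_support by (meson card_mono finite_atLeastAtMost finite_subset)
qed

lemma no_small_solution_iff_sum_n_count_ge:
  assumes "\<forall>i\<in>{1..n}. tight_frame (A i) (m i) (\<alpha> i)"
  shows "(\<forall>S. admissible_sets m n S \<and> int (\<Sum>i\<in>{1..n}. card (S i)) < s \<longrightarrow>
            (\<forall>x. x \<noteq> 0 \<longrightarrow> \<not> frame_eqs A \<alpha> n S x)) \<longleftrightarrow>
         (\<forall>\<phi>. \<phi> \<noteq> 0 \<longrightarrow> s \<le> int (\<Sum>i\<in>{1..n}. n_count (A i) (m i) \<phi>))"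
proof (intro iffI allI impI notI)
  fix \<phi> :: "complex ^ 'a"
  assume no_small: "\<forall>S. admissible_sets m n S \<and> int (\<Sum>i\<in>{1..n}. card (S i)) < s \<longrightarrow>
                      (\<forall>x. x \<noteq> 0 \<longrightarrow> \<not> frame_eqs A \<alpha> n S x)" and "\<phi> \<noteq> 0"
  then show "s \<le> int (\<Sum>i\<in>{1..n}. n_count (A i) (m i) \<phi>)"
    using no_small[rule_format, of "\<lambda>i. frame_support (A i) (m i) \<phi>" \<phi>]
      admissible_frame_support[OF assms] frame_eqs_frame_support[OF assms]
    by (force simp: n_count_eq_card_frame_support)
next
  fix S and x :: "complex ^ 'a"
  assume lower: "\<forall>\<phi>. \<phi> \<noteq> 0 \<longrightarrow> s \<le> int (\<Sum>i\<in>{1..n}. n_count (A i) (m i) \<phi>)"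
    and small: "admissible_sets m n S \<and> int (\<Sum>i\<in>{1..n}. card (S i)) < s"
    and x: "x \<noteq> 0" "frame_eqs A \<alpha> n S x"
  have "(\<Sum>i\<in>{1..n}. n_count (A i) (m i) x) \<le> (\<Sum>i\<in>{1..n}. card (S i))"
    using sum_n_count_le_sum_card[OF assms] small x(2) by blast
  with lower x(1) small show False
    by (meson le_less_trans not_less of_nat_le_iff)
qed

lemma solution_of_size_iff_sum_n_count_eq:
  assumes "\<forall>i\<in>{1..n}. tight_frame (A i) (m i) (\<alpha> i)"
    and lower: "\<forall>\<phi>. \<phi> \<noteq> 0 \<longrightarrow> s \<le> int (\<Sum>i\<in>{1..n}. n_count (A i) (m i) \<phi>)"
  shows "(\<exists>S x. admissible_sets m n S \<and> int (\<Sum>i\<in>{1..n}. card (S i)) = s \<and>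
            x \<noteq> 0 \<and> frame_eqs A \<alpha> n S x) \<longleftrightarrow>
         (\<exists>\<phi>. \<phi> \<noteq> 0 \<and> int (\<Sum>i\<in>{1..n}. n_count (A i) (m i) \<phi>) = s)"
proof
  assume "\<exists>S x. admissible_sets m n S \<and> int (\<Sum>i\<in>{1..n}. card (S i)) = s \<and>
            x \<noteq> 0 \<and> frame_eqs A \<alpha> n S x"
  then obtain S x where S: "admissible_sets m n S" "int (\<Sum>i\<in>{1..n}. card (S i)) = s"
      and x: "x \<noteq> 0" "frame_eqs A \<alpha> n S x"
    by blast
  have "(\<Sum>i\<in>{1..n}. n_count (A i) (m i) x) \<le> (\<Sum>i\<in>{1..n}. card (S i))"
    using sum_n_count_le_sum_card[OF assms(1) S(1) x(2)] .
  with S(2) x(1) lower have "int (\<Sum>i\<in>{1..n}. n_count (A i) (m i) x) = s"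
    by (metis antisym of_nat_le_iff)
  with x(1) show "\<exists>\<phi>. \<phi> \<noteq> 0 \<and> int (\<Sum>i\<in>{1..n}. n_count (A i) (m i) \<phi>) = s"
    by blast
next
  assume "\<exists>\<phi>. \<phi> \<noteq> 0 \<and> int (\<Sum>i\<in>{1..n}. n_count (A i) (m i) \<phi>) = s"
  then obtain \<phi> where "\<phi> \<noteq> 0" "int (\<Sum>i\<in>{1..n}. n_count (A i) (m i) \<phi>) = s"
    by blast
  then show "\<exists>S x. admissible_sets m n S \<and> int (\<Sum>i\<in>{1..n}. card (S i)) = s \<and>
               x \<noteq> 0 \<and> frame_eqs A \<alpha> n S x"
    using admissible_frame_support[OF assms(1)] frame_eqs_frame_support[OF assms(1)]
    by (force simp: n_count_eq_card_frame_support)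
qed

theorem mainTheorem6:
  fixes A :: "nat \<Rightarrow> nat \<Rightarrow> complex ^ 'd" and m :: "nat \<Rightarrow> nat"
    and \<alpha> :: "nat \<Rightarrow> real" and n :: nat and s :: int
  assumes "\<forall>i\<in>{1..n}. tight_frame (A i) (m i) (\<alpha> i)"
  shows "s_order_incompatible A m \<alpha> n s \<longleftrightarrow>
    ((\<forall>\<phi>. \<phi> \<noteq> 0 \<longrightarrow> int (\<Sum>i\<in>{1..n}. n_count (A i) (m i) \<phi>) \<ge> s) \<and>
     (\<exists>\<phi>. \<phi> \<noteq> 0 \<and> int (\<Sum>i\<in>{1..n}. n_count (A i) (m i) \<phi>) = s))"
  unfolding s_order_incompatible_def
  using no_small_solution_iff_sum_n_count_ge[OF assms, of s]
    solution_of_size_iff_sum_n_count_eq[OF assms, of s]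
  by blast

end
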